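(* Consider natural gradient descent with the layer-wise metric $G_{\mathrm{layer},t}$ built from a constant symmetric positive definite $\Sigma\in\mathbb{R}^{L\times L}$, and let $\alpha=1_L^\top\Sigma^{-1}1_L$. If the learning rate is $\eta=c/\alpha$ with $0<c<2$, then the asymptotic (infinite-width) training dynamics converge to the global minimum: on the training inputs they are $f_t(x)=y+(1-c)^t(f_0(x)-y)$, which tends to $y$ as $t\to\infty$. In particular, for $c=1$ the dynamics reach $f_t(x)=y$ after one iteration.
   Context: Network: for $l=1,\dots,L$, $u_l=\frac{\sigma_w}{\sqrt{M_{l-1}}}W_lh_{l-1}+\sigma_b b_l$, $h_l=\phi(u_l)$, $h_0=x\in\mathbb{R}^{M_0}$; hidden widths $M_l=\alpha_lM$ ($l<L$), $M_L=C$; output $f_\theta=u_L$; $\theta_l$ = parameters of layer $l$; i.i.d. $\mathcal{N}(0,1)$ initialization of all weights and biases; $\phi$ locally Lipschitz, non-polynomial, with $\phi'$ locally Lipschitz; training inputs with $\|x_n\|_2=1$, pairwise distinct; MSE loss $\mathcal{L}(\theta)=\frac1{2N}\sum_n\|y_n-f_\theta(x_n)\|^2$. $f_t(x),y\in\mathbb{R}^{CN}$ are the concatenations over training samples. NGD: $\theta_{t+1}=\theta_t-\eta G_t^{-1}\nabla_\theta\mathcal{L}(\theta_t)$ in the zero-damping limit $\rho\to0^+$, with $G_{\mathrm{layer},t}=\frac1N S_t^\top(\Sigma\otimes I_{CN})S_t+\rho I$, $S_t$ block diagonal with blocks $\nabla_{\theta_l}f_t(x)$, $l=1,\dots,L$.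 The "asymptotic dynamics" are those to which the NGD outputs $f_t$ are uniformly-in-$t$ close with high probability as the width $M\to\infty$, namely $f_t(x')=\bar\Theta(x',x)\bar\Theta^{-1}(I-(I-\eta\bar\Theta)^t)(y-f_0(x))+f_0(x')$ with $\bar\Theta(x',x)=J_0(x')G_0^{-1}J_0(x)^\top/N$, $J_0=\nabla_\theta f_0$, $\bar\Theta=\bar\Theta(x,x)=\alpha I$. *)

theory Defs
  imports "HOL-Analysis.Analysis"
begin

fun matpow :: "real^'n^'n \<Rightarrow> nat \<Rightarrow> real^'n^'n" where
  "matpow A 0 = mat 1"
| "matpow A (Suc k) = A ** matpow A k"

definition spd :: "real^'n^'n \<Rightarrow> bool" where
  "spd S \<longleftrightarrow> transpose S = S \<and> (\<forall>v. v \<noteq> 0 \<longrightarrow> v \<bullet> (S *v v) > 0)"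

definition ones :: "real^'n" where
  "ones = (\<chi> i. 1)"

definition asym_dyn :: "real^'m^'m \<Rightarrow> real \<Rightarrow> real^'m \<Rightarrow> real^'m \<Rightarrow> nat \<Rightarrow> real^'m" where
  "asym_dyn Th eta y f0 t =
     (Th ** matrix_inv Th) *v ((mat 1 - matpow (mat 1 - eta *\<^sub>R Th) t) *v (y - f0)) + f0"

end

theory Submission
  imports Defs
begin

text \<open>For \<open>\<Theta> = \<alpha> I\<close> the dynamics decouple: \<open>\<Theta> \<Theta>\<inverse> = I\<close> and \<open>I - \<eta> \<Theta> = (1 - c) I\<close>, so the
  residual \<open>f\<^sub>t - y\<close> is multiplied by the scalar \<open>1 - c\<close> in every step. Positive definiteness of
  \<open>\<Sigma>\<close> (hence of \<open>\<Sigma>\<inverse>\<close>) gives \<open>\<alpha> > 0\<close>, so the step size \<open>c / \<alpha>\<close> makes sense, and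
  \<open>|1 - c| < 1\<close> for \<open>0 < c < 2\<close>.\<close>

lemma matrix_inv_inverse:
  fixes A :: "'a::semiring_1^'n^'m"
  assumes "invertible A"
  shows "A ** matrix_inv A = mat 1" and "matrix_inv A ** A = mat 1"
  using someI_ex[OF assms[unfolded invertible_def]] unfolding matrix_inv_def by auto

lemma spd_invertible:
  fixes S :: "real^'n^'n"
  assumes "spd S"
  shows "invertible S"
proof -
  have "S *v v = 0 \<Longrightarrow> v = 0" for v
    using assms unfolding spd_def by (metis inner_zero_right less_irrefl)
  then show ?thesis
    by (simp add: invertible_left_inverse matrix_left_invertible_ker)
qed

lemma spd_inverse_quadratic_form_pos:
  fixes S :: "real^'n^'n" and v :: "real^'n"
  assumes "spd S" and "v \<noteq> 0"
  shows "v \<bullet> (matrix_inv S *v v) > 0"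
proof -
  define w where "w = matrix_inv S *v v"
  have "S *v w = v"
    unfolding w_def
    by (simp add: matrix_vector_mul_assoc matrix_inv_inverse spd_invertible[OF assms(1)])
  with assms(2) have "w \<noteq> 0" by auto
  with assms(1) have "w \<bullet> (S *v w) > 0" unfolding spd_def by blast
  with \<open>S *v w = v\<close> show ?thesis
    by (simp add: w_def inner_commute)
qed

lemma ones_nonzero: "(ones :: real^'n) \<noteq> 0"
  by (metis ones_def vec_lambda_beta zero_index zero_neq_one)

lemma scaleR_mat_1_mult_vector: "((a::real) *\<^sub>R (mat 1 :: real^'n^'n)) *v x = a *\<^sub>R x"
  by (simp add: vec_eq_iff matrix_vector_mult_def mat_def if_distrib if_distribR sum.delta
      cong: if_cong)

lemma matpow_scaleR_mat_1: "matpow (a *\<^sub>R (mat 1 :: real^'n^'n)) t = (a ^ t) *\<^sub>R mat 1"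
  by (induction t) (auto simp: matrix_scalar_ac simp flip: scalar_matrix_assoc)

lemma matrix_inv_scaleR_mat_1:
  fixes a :: real
  assumes "a \<noteq> 0"
  shows "(a *\<^sub>R mat 1 :: real^'n^'n) ** matrix_inv (a *\<^sub>R mat 1) = mat 1"
proof -
  have "invertible (mat 1 :: real^'n^'n)"
    unfolding invertible_def by auto
  with assms show ?thesis
    by (simp add: matrix_inv_inverse scalar_invertible)
qed

lemma asym_dyn_scaleR_mat_1:
  fixes a eta :: real and y f0 :: "real^'n"
  assumes "a \<noteq> 0"
  shows "asym_dyn (a *\<^sub>R mat 1) eta y f0 t = y + (1 - eta * a) ^ t *\<^sub>R (f0 - y)"
proof -
  have step_matrix: "mat 1 - eta *\<^sub>R (a *\<^sub>R mat 1) = (1 - eta * a) *\<^sub>R (mat 1 :: real^'n^'n)"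
    by (simp add: algebra_simps)
  have "asym_dyn (a *\<^sub>R mat 1) eta y f0 t
      = (mat 1 - (1 - eta * a) ^ t *\<^sub>R mat 1) *v (y - f0) + f0"
    unfolding asym_dyn_def matrix_inv_scaleR_mat_1[OF assms] step_matrix matpow_scaleR_mat_1
    by simp
  also have "\<dots> = y + (1 - eta * a) ^ t *\<^sub>R (f0 - y)"
    by (simp add: matrix_vector_mult_diff_rdistrib scaleR_mat_1_mult_vector algebra_simps)
  finally show ?thesis .
qed

lemma geometric_residual_tendsto:
  fixes r :: real and y v :: "'a::real_normed_vector"
  assumes "\<bar>r\<bar> < 1"
  shows "(\<lambda>t. y + r ^ t *\<^sub>R v) \<longlonglongrightarrow> y"
proof -
  have "(\<lambda>t. r ^ t) \<longlonglongrightarrow> 0"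
    using assms by (simp add: LIMSEQ_abs_realpow_zero2)
  then have "(\<lambda>t. y + r ^ t *\<^sub>R v) \<longlonglongrightarrow> y + 0 *\<^sub>R v"
    by (intro tendsto_add tendsto_const tendsto_scaleR)
  then show ?thesis by simp
qed

theorem corollary4p2:
  fixes Sigma :: "real^'L^'L" and Theta :: "real^'CN^'CN"
    and y f0 :: "real^'CN" and f :: "nat \<Rightarrow> real^'CN"
    and alpha eta c :: real
  assumes "spd Sigma"
    and "alpha = ones \<bullet> (matrix_inv Sigma *v ones)"
    and "Theta = alpha *\<^sub>R mat 1"
    and "eta = c / alpha"
    and "0 < c" and "c < 2"
    and "\<And>t. f t = asym_dyn Theta eta y f0 t"
  shows "(\<forall>t. f t = y + (1 - c) ^ t *\<^sub>R (f0 - y))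
       \<and> f \<longlonglongrightarrow> y
       \<and> (c = 1 \<longrightarrow> f 1 = y)"
proof -
  have "alpha > 0"
    using spd_inverse_quadratic_form_pos[OF assms(1) ones_nonzero] assms(2) by simp
  moreover have "eta * alpha = c"
    using \<open>alpha > 0\<close> assms(4) by simp
  ultimately have f_closed_form: "f = (\<lambda>t. y + (1 - c) ^ t *\<^sub>R (f0 - y))"
    using assms(3,7) asym_dyn_scaleR_mat_1[of alpha] by fastforce
  have "\<bar>1 - c\<bar> < 1"
    using assms(5,6) by auto
  then have "f \<longlonglongrightarrow> y"
    unfolding f_closed_form by (rule geometric_residual_tendsto)
  with f_closed_form show ?thesis by simp
qed

end
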